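(* Let $\mathbb{F}$ be a field with $\mathrm{Char}(\mathbb{F})=3$. Every $2$-dimensional diassociative algebra $(V,\dashv,\vdash)$ over $\mathbb{F}$ whose product $\dashv$ is not identically zero is isomorphic to one of the following dialgebras $\{A,B\}$ (for some value of the indicated parameter), and dialgebras from different items are pairwise non-isomorphic: <ol> <li>$D_{13,3}^1(\delta_1)$: $A=\begin{pmatrix}0&0&0&0\\1&0&0&0\end{pmatrix}$, $B=\begin{pmatrix}0&0&0&0\\ \delta_1&0&0&0\end{pmatrix}$, $\delta_1\in\mathbb{F}$;</li> <li>$D_{3,3}^2$: $A=B=\begin{pmatrix}1&0&0&0\\0&0&0&0\end{pmatrix}$;</li> <li>$D_{3,3}^3$: $A=\begin{pmatrix}1&0&0&0\\0&0&0&0\end{pmatrix}$, $B=\begin{pmatrix}1&0&0&0\\0&1&0&0\end{pmatrix}$;</li> <li>$D_{3,3}^4$: $A=B=\begin{pmatrix}1&0&0&0\\0&1&0&0\end{pmatrix}$;</li> <li>$D_{3,3}^5(\delta_1)$: $A=\begin{pmatrix}2&0&0&0\\0&0&2&0\end{pmatrix}$, $B=\begin{pmatrix}2&0&0&0\\ \delta_1&0&0&0\end{pmatrix}$, $\delta_1\in\mathbb{F}$;</li> <li>$D_{3,3}^6$: $A=\begin{pmatrix}2&0&0&0\\0&0&2&0\end{pmatrix}$, $B=\begin{pmatrix}2&0&0&0\\0&2&0&0\end{pmatrix}$;</li> <li>$D_{3,3}^7$: $A=B=\begin{pmatrix}2&0&0&0\\0&0&2&0\end{pmatrix}$;</li>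 <li>$D_{3,3}^8(\alpha_4)$: $A=B=\begin{pmatrix}2&0&0&\alpha_4\\0&2&2&0\end{pmatrix}$, $\alpha_4\in\mathbb{F}$.</li> </ol>
   Context: Let $\mathbb{F}$ be a field. A diassociative algebra (associative dialgebra) is a vector space $V$ over $\mathbb{F}$ with two bilinear products $\dashv,\vdash$ satisfying, for all $x,y,z\in V$: $(x\dashv y)\dashv z=x\dashv(y\dashv z)$; $x\dashv(y\dashv z)=x\dashv(y\vdash z)$; $(x\vdash y)\dashv z=x\vdash(y\dashv z)$; $(x\dashv y)\vdash z=(x\vdash y)\vdash z$; $(x\vdash y)\vdash z=x\vdash(y\vdash z)$. Two such dialgebras are isomorphic if there is an invertible linear map $f$ with $f(x\dashv y)=f(x)\dashv' f(y)$ and $f(x\vdash y)=f(x)\vdash' f(y)$ for all $x,y$. For $\dim V=2$ with fixed basis $(e_1,e_2)$, a $2\times4$ matrix $\begin{pmatrix}\alpha_1&\alpha_2&\alpha_3&\alpha_4\\ \beta_1&\beta_2&\beta_3&\beta_4\end{pmatrix}$ encodes a bilinear product $\ast$ by $e_1\ast e_1=\alpha_1e_1+\beta_1e_2$, $e_1\ast e_2=\alpha_2e_1+\beta_2e_2$, $e_2\ast e_1=\alpha_3e_1+\beta_3e_2$, $e_2\ast e_2=\alpha_4e_1+\beta_4e_2$. A pair $\{A,B\}$ denotes the dialgebra whose product $\dashv$ is encoded by $A$ and whose product $\vdash$ is encoded by $B$. *)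

theory Defs
  imports Main
begin

text \<open>A bilinear product is encoded by its 2x4 structure-constant matrix
  (alpha1..alpha4 in the first row, beta1..beta4 in the second).\<close>

datatype 'a sc = SC (al1: 'a) (al2: 'a) (al3: 'a) (al4: 'a)
                    (be1: 'a) (be2: 'a) (be3: 'a) (be4: 'a)

definition scmul :: "'a::field sc \<Rightarrow> 'a \<times> 'a \<Rightarrow> 'a \<times> 'a \<Rightarrow> 'a \<times> 'a" where
  "scmul M x y =
     (fst x * fst y * al1 M + fst x * snd y * al2 M + snd x * fst y * al3 M + snd x * snd y * al4 M,
      fst x * fst y * be1 M + fst x * snd y * be2 M + snd x * fst y * be3 M + snd x * snd y * be4 M)"

text \<open>Diassociativity of the pair {A,B}: A encodes the left product, B the right one.\<close>
definition diassociative :: "'a::field sc \<Rightarrow> 'a sc \<Rightarrow> bool" where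
  "diassociative A B \<longleftrightarrow> (\<forall>x y z.
      scmul A (scmul A x y) z = scmul A x (scmul A y z) \<and>
      scmul A x (scmul A y z) = scmul A x (scmul B y z) \<and>
      scmul A (scmul B x y) z = scmul B x (scmul A y z) \<and>
      scmul B (scmul A x y) z = scmul B (scmul B x y) z \<and>
      scmul B (scmul B x y) z = scmul B x (scmul B y z))"

definition linmap :: "'a::field \<Rightarrow> 'a \<Rightarrow> 'a \<Rightarrow> 'a \<Rightarrow> 'a \<times> 'a \<Rightarrow> 'a \<times> 'a" where
  "linmap a b c d x = (a * fst x + b * snd x, c * fst x + d * snd x)"

definition dialg_iso :: "'a::field sc \<times> 'a sc \<Rightarrow> 'a sc \<times> 'a sc \<Rightarrow> bool" where
  "dialg_iso D D' \<longleftrightarrow> (\<exists>a b c d. a * d - b * c \<noteq> 0 \<and>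
      (\<forall>x y. linmap a b c d (scmul (fst D) x y) = scmul (fst D') (linmap a b c d x) (linmap a b c d y) \<and>
             linmap a b c d (scmul (snd D) x y) = scmul (snd D') (linmap a b c d x) (linmap a b c d y)))"

text \<open>The list of the theorem: item k with parameter t (ignored for parameter-free items).\<close>
definition char3_family :: "nat \<Rightarrow> 'a::field \<Rightarrow> 'a sc \<times> 'a sc" where
  "char3_family k t =
    (if k = 1 then (SC 0 0 0 0 1 0 0 0, SC 0 0 0 0 t 0 0 0)
     else if k = 2 then (SC 1 0 0 0 0 0 0 0, SC 1 0 0 0 0 0 0 0)
     else if k = 3 then (SC 1 0 0 0 0 0 0 0, SC 1 0 0 0 0 1 0 0)
     else if k = 4 then (SC 1 0 0 0 0 1 0 0, SC 1 0 0 0 0 1 0 0)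
     else if k = 5 then (SC 2 0 0 0 0 0 2 0, SC 2 0 0 0 t 0 0 0)
     else if k = 6 then (SC 2 0 0 0 0 0 2 0, SC 2 0 0 0 0 2 0 0)
     else if k = 7 then (SC 2 0 0 0 0 0 2 0, SC 2 0 0 0 0 0 2 0)
     else if k = 8 then (SC 2 0 0 t 0 2 2 0, SC 2 0 0 t 0 2 2 0)
     else (SC 0 0 0 0 0 0 0 0, SC 0 0 0 0 0 0 0 0))"

definition in_item :: "nat \<Rightarrow> 'a::field sc \<times> 'a sc \<Rightarrow> bool" where
  "in_item k D \<longleftrightarrow> (\<exists>t. D = char3_family k t)"

end

theory Submission
  imports Defs
begin

text \<open>Changes of basis bring every dialgebra to a normal form. The left product is associative,
  so if it is nonzero some square w w is nonzero; then either (w, w w) is a basis in which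
  e1 e1 = e2, or a multiple of w is a nonzero idempotent. In either case associativity leaves a few
  normal forms for the left product, and for each of them the diassociativity identities on basis
  vectors leave only the listed right products. Items are told apart by isomorphism invariants:
  whether left-normed triple products of the left product vanish, and whether each product has a
  left or a right unit.\<close>

lemma square_eq_self_iff: "(x::'a::idom) * x = x \<longleftrightarrow> x = 0 \<or> x = 1"
proof -
  have "x * x = x \<longleftrightarrow> x * (x - 1) = 0" by (simp add: algebra_simps)
  then show ?thesis by simp
qed

lemma square_eq_neg_self_iff: "(x::'a::idom) * x = - x \<longleftrightarrow> x = 0 \<or> x = -1"
proof -
  have "x * x = - x \<longleftrightarrow> x * (x + 1) = 0" by (simp add: algebra_simps eq_neg_iff_add_eq_0)
  then show ?thesis by (simp add: eq_neg_iff_add_eq_0)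
qed

lemma two_eq_neg_one:
  assumes "(3::'a::ring_1) = 0" shows "(2::'a) = -1"
proof -
  have "(2::'a) = 3 - 1" by simp
  with assms show ?thesis by simp
qed

section \<open>Change of basis\<close>

definition det2 :: "'a::field \<times> 'a \<Rightarrow> 'a \<times> 'a \<Rightarrow> 'a" where
  "det2 u v = fst u * snd v - snd u * fst v"

definition lincomb :: "'a::field \<times> 'a \<Rightarrow> 'a \<times> 'a \<Rightarrow> 'a \<times> 'a \<Rightarrow> 'a \<times> 'a" where
  "lincomb u v p = (fst p * fst u + snd p * fst v, fst p * snd u + snd p * snd v)"

definition coords :: "'a::field \<times> 'a \<Rightarrow> 'a \<times> 'a \<Rightarrow> 'a \<times> 'a \<Rightarrow> 'a \<times> 'a" where
  "coords u v w = ((snd v * fst w - fst v * snd w) / det2 u v, (fst u * snd w - snd u * fst w) / det2 u v)"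

definition change_basis :: "'a::field \<times> 'a \<Rightarrow> 'a \<times> 'a \<Rightarrow> 'a sc \<Rightarrow> 'a sc" where
  "change_basis u v M =
     (let c = \<lambda>x y. coords u v (scmul M x y) in
      SC (fst (c u u)) (fst (c u v)) (fst (c v u)) (fst (c v v))
         (snd (c u u)) (snd (c u v)) (snd (c v u)) (snd (c v v)))"

lemma lincomb_coords:
  assumes "det2 u v \<noteq> 0" shows "lincomb u v (coords u v w) = w"
  using assms by (simp add: lincomb_def coords_def field_simps prod_eq_iff)
    (simp add: det2_def algebra_simps)

lemma coords_lincomb:
  assumes "det2 u v \<noteq> 0" shows "coords u v (lincomb u v p) = p"
  using assms by (simp add: lincomb_def coords_def field_simps prod_eq_iff)
    (simp add: det2_def algebra_simps)

lemma coords_eq_iff: "det2 u v \<noteq> 0 \<Longrightarrow> coords u v w = p \<longleftrightarrow> w = lincomb u v p"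
  using lincomb_coords coords_lincomb by metis

lemma scmul_change_basis:
  assumes "det2 u v \<noteq> 0"
  shows "scmul (change_basis u v M) p q = coords u v (scmul M (lincomb u v p) (lincomb u v q))"
  using assms by (simp add: change_basis_def coords_def scmul_def lincomb_def field_simps)

lemma square_change_basis_e1_iff:
  "det2 u v \<noteq> 0 \<Longrightarrow> scmul (change_basis u v M) (1, 0) (1, 0) = p \<longleftrightarrow> scmul M u u = lincomb u v p"
  by (simp add: scmul_change_basis coords_eq_iff lincomb_def)

section \<open>Isomorphisms\<close>

definition sc_hom :: "('a::field \<times> 'a \<Rightarrow> 'a \<times> 'a) \<Rightarrow> 'a sc \<Rightarrow> 'a sc \<Rightarrow> bool" where
  "sc_hom f M M' \<longleftrightarrow> (\<forall>x y. f (scmul M x y) = scmul M' (f x) (f y))"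

lemma dialg_iso_iff_sc_hom:
  "dialg_iso D E \<longleftrightarrow> (\<exists>a b c d. a * d - b * c \<noteq> 0 \<and>
     sc_hom (linmap a b c d) (fst D) (fst E) \<and> sc_hom (linmap a b c d) (snd D) (snd E))"
  unfolding dialg_iso_def sc_hom_def by blast

lemma sc_hom_comp: "sc_hom f M M' \<Longrightarrow> sc_hom g M' M'' \<Longrightarrow> sc_hom (g \<circ> f) M M''"
  by (simp add: sc_hom_def del: split_paired_All)

lemma sc_hom_inverse:
  assumes "sc_hom f M M'" "\<And>x. g (f x) = x" "\<And>x. f (g x) = x"
  shows "sc_hom g M' M"
  using assms unfolding sc_hom_def by metis

lemma linmap_comp:
  "linmap a b c d \<circ> linmap a' b' c' d' =
   linmap (a * a' + b * c') (a * b' + b * d') (c * a' + d * c') (c * b' + d * d')"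
  by (rule ext) (simp add: linmap_def algebra_simps)

lemma linmap_inverse:
  fixes a b c d :: "'a::field"
  assumes "k = a * d - b * c" "k \<noteq> 0"
  shows "linmap (d / k) (- b / k) (- c / k) (a / k) (linmap a b c d x) = x"
    and "linmap a b c d (linmap (d / k) (- b / k) (- c / k) (a / k) x) = x"
  using assms(2) by (simp_all add: linmap_def field_simps prod_eq_iff) (simp_all add: assms(1) algebra_simps)

lemma dialg_iso_refl: "dialg_iso D D"
proof -
  have "linmap 1 0 0 1 = (id :: 'a::field \<times> 'a \<Rightarrow> _)" by (rule ext) (simp add: linmap_def)
  then show ?thesis unfolding dialg_iso_iff_sc_hom sc_hom_def by (intro exI[of _ 1] exI[of _ 0]) simp
qed

lemma dialg_iso_sym:
  assumes "dialg_iso D E" shows "dialg_iso E D"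
proof -
  obtain a b c d where det: "a * d - b * c \<noteq> 0"
    and hom: "sc_hom (linmap a b c d) (fst D) (fst E)" "sc_hom (linmap a b c d) (snd D) (snd E)"
    using assms unfolding dialg_iso_iff_sc_hom by blast
  define k where "k = a * d - b * c"
  have "k \<noteq> 0" using det k_def by simp
  have "(d / k) * (a / k) - (- b / k) * (- c / k) = (a * d - b * c) / (k * k)"
    by (simp add: diff_divide_distrib)
  also have "\<dots> = 1 / k" using \<open>k \<noteq> 0\<close> by (simp add: k_def)
  finally have "(d / k) * (a / k) - (- b / k) * (- c / k) \<noteq> 0" using \<open>k \<noteq> 0\<close> by simp
  moreover note inv = linmap_inverse[OF k_def \<open>k \<noteq> 0\<close>]
  ultimately show ?thesis
    unfolding dialg_iso_iff_sc_hom using sc_hom_inverse[OF hom(1) inv] sc_hom_inverse[OF hom(2) inv]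
    by blast
qed

lemma dialg_iso_trans:
  assumes "dialg_iso D1 D2" "dialg_iso D2 D3" shows "dialg_iso D1 D3"
proof -
  obtain a b c d where det: "a * d - b * c \<noteq> 0"
    and hom: "sc_hom (linmap a b c d) (fst D1) (fst D2)" "sc_hom (linmap a b c d) (snd D1) (snd D2)"
    using assms(1) unfolding dialg_iso_iff_sc_hom by blast
  obtain a' b' c' d' where det': "a' * d' - b' * c' \<noteq> 0"
    and hom': "sc_hom (linmap a' b' c' d') (fst D2) (fst D3)" "sc_hom (linmap a' b' c' d') (snd D2) (snd D3)"
    using assms(2) unfolding dialg_iso_iff_sc_hom by blast
  have "(a' * a + b' * c) * (c' * b + d' * d) - (a' * b + b' * d) * (c' * a + d' * c)
        = (a' * d' - b' * c') * (a * d - b * c)"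
    by (simp add: algebra_simps)
  then show ?thesis
    unfolding dialg_iso_iff_sc_hom
    using det det' sc_hom_comp[OF hom(1) hom'(1)] sc_hom_comp[OF hom(2) hom'(2)]
    unfolding linmap_comp by (metis mult_eq_0_iff)
qed

lemma diassociative_surj_hom:
  assumes "surj f" "sc_hom f A A'" "sc_hom f B B'" "diassociative A B"
  shows "diassociative A' B'"
  unfolding diassociative_def
proof (intro allI)
  fix x' y' z'
  obtain x y z where xyz: "x' = f x" "y' = f y" "z' = f z" using \<open>surj f\<close> by (metis surjD)
  have hom: "\<And>x y. scmul A' (f x) (f y) = f (scmul A x y)" "\<And>x y. scmul B' (f x) (f y) = f (scmul B x y)"
    using assms(2,3) unfolding sc_hom_def by metis+
  show "scmul A' (scmul A' x' y') z' = scmul A' x' (scmul A' y' z') \<and>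
      scmul A' x' (scmul A' y' z') = scmul A' x' (scmul B' y' z') \<and>
      scmul A' (scmul B' x' y') z' = scmul B' x' (scmul A' y' z') \<and>
      scmul B' (scmul A' x' y') z' = scmul B' (scmul B' x' y') z' \<and>
      scmul B' (scmul B' x' y') z' = scmul B' x' (scmul B' y' z')"
    using assms(4)[unfolded diassociative_def, rule_format, of x y z] unfolding xyz by (simp add: hom)
qed

lemma sc_hom_coords: "det2 u v \<noteq> 0 \<Longrightarrow> sc_hom (coords u v) M (change_basis u v M)"
  by (simp add: sc_hom_def scmul_change_basis lincomb_coords del: split_paired_All)

lemma surj_coords: "det2 u v \<noteq> 0 \<Longrightarrow> surj (coords u v)"
  by (metis coords_lincomb surjI)

lemma coords_eq_linmap:
  "det2 u v \<noteq> 0 \<Longrightarrow>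
   coords u v = linmap (snd v / det2 u v) (- fst v / det2 u v) (- snd u / det2 u v) (fst u / det2 u v)"
  by (rule ext) (simp add: coords_def linmap_def diff_divide_distrib)

lemma diassociative_change_basis:
  "det2 u v \<noteq> 0 \<Longrightarrow> diassociative A B \<Longrightarrow> diassociative (change_basis u v A) (change_basis u v B)"
  by (rule diassociative_surj_hom[OF surj_coords sc_hom_coords sc_hom_coords])

lemma dialg_iso_change_basis:
  assumes "det2 u v \<noteq> 0"
  shows "dialg_iso (A, B) (change_basis u v A, change_basis u v B)"
proof -
  define k where "k = det2 u v"
  have "(snd v / k) * (fst u / k) - (- fst v / k) * (- snd u / k) = det2 u v / (k * k)"
    by (simp add: det2_def diff_divide_distrib mult.commute)
  also have "\<dots> = 1 / k" using assms by (simp add: k_def)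
  finally have "(snd v / k) * (fst u / k) - (- fst v / k) * (- snd u / k) \<noteq> 0"
    using assms k_def by simp
  then show ?thesis
    unfolding dialg_iso_iff_sc_hom fst_conv snd_conv
    using sc_hom_coords[OF assms, unfolded coords_eq_linmap[OF assms], folded k_def] by blast
qed

section \<open>Reduction to the listed normal forms\<close>

definition classified :: "'a::field sc \<Rightarrow> 'a sc \<Rightarrow> bool" where
  "classified A B \<longleftrightarrow> (\<exists>k \<in> {1..8}. \<exists>D. in_item k D \<and> dialg_iso (A, B) D)"

lemma classified_iso: "dialg_iso (A, B) (A', B') \<Longrightarrow> classified A' B' \<Longrightarrow> classified A B"
  unfolding classified_def using dialg_iso_trans by blast

lemma classified_change_basis:
  "det2 u v \<noteq> 0 \<Longrightarrow> classified (change_basis u v A) (change_basis u v B) \<Longrightarrow> classified A B"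
  using classified_iso dialg_iso_change_basis by blast

lemma classified_by_change_basis:
  assumes "det2 u v \<noteq> 0" "diassociative A B"
    and "\<And>B'. diassociative (change_basis u v A) B' \<Longrightarrow> classified (change_basis u v A) B'"
  shows "classified A B"
  using assms classified_change_basis diassociative_change_basis by blast

lemma classified_item: "k \<in> {1..8} \<Longrightarrow> (A, B) = char3_family k t \<Longrightarrow> classified A B"
  unfolding classified_def in_item_def using dialg_iso_refl by metis

lemma diassociativeD:
  assumes "diassociative A B"
  shows "scmul A (scmul A x y) z = scmul A x (scmul A y z)"
    and "scmul A x (scmul A y z) = scmul A x (scmul B y z)"
    and "scmul A (scmul B x y) z = scmul B x (scmul A y z)"
    and "scmul B (scmul A x y) z = scmul B (scmul B x y) z"
    and "scmul B (scmul B x y) z = scmul B x (scmul B y z)"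
  using assms unfolding diassociative_def by blast+

lemma diassociative_basis:
  assumes "diassociative A B"
  shows "\<forall>x \<in> {(1, 0), (0, 1)}. \<forall>y \<in> {(1, 0), (0, 1)}. \<forall>z \<in> {(1, 0), (0, 1)}.
      scmul A (scmul A x y) z = scmul A x (scmul A y z) \<and>
      scmul A x (scmul A y z) = scmul A x (scmul B y z) \<and>
      scmul A (scmul B x y) z = scmul B x (scmul A y z) \<and>
      scmul B (scmul A x y) z = scmul B (scmul B x y) z \<and>
      scmul B (scmul B x y) z = scmul B x (scmul B y z)"
  using assms unfolding diassociative_def by blast

definition sc_associative :: "'a::field sc \<Rightarrow> bool" where
  "sc_associative M \<longleftrightarrow> (\<forall>x y z. scmul M (scmul M x y) z = scmul M x (scmul M y z))"

lemma diassociative_imp_sc_associative: "diassociative A B \<Longrightarrow> sc_associative A"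
  unfolding diassociative_def sc_associative_def by blast

lemma right_products_item1:
  assumes "diassociative (SC 0 0 0 0 1 0 0 0) B"
  shows "\<exists>t. B = SC 0 0 0 0 t 0 0 0"
proof (cases B)
  case (SC p1 p2 p3 p4 q1 q2 q3 q4)
  show ?thesis using diassociative_basis[OF assms[unfolded SC]] unfolding SC
    by (simp add: scmul_def, (elim conjE)?, (simp add: minus_equation_iff)?)
qed

lemma right_products_items23:
  assumes "diassociative (SC 1 0 0 0 0 0 0 0) B"
  shows "B = SC 1 0 0 0 0 0 0 0 \<or> B = SC 1 0 0 0 0 1 0 0"
proof (cases B)
  case (SC p1 p2 p3 p4 q1 q2 q3 q4)
  show ?thesis using diassociative_basis[OF assms[unfolded SC]] unfolding SC
    by (simp add: scmul_def, (elim conjE)?, (simp add: minus_equation_iff)?)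
qed

lemma right_products_item4:
  assumes "diassociative (SC 1 0 0 0 0 1 0 0) B"
  shows "B = SC 1 0 0 0 0 1 0 0"
proof (cases B)
  case (SC p1 p2 p3 p4 q1 q2 q3 q4)
  show ?thesis using diassociative_basis[OF assms[unfolded SC]] unfolding SC
    by (simp add: scmul_def, (elim conjE)?, (simp add: minus_equation_iff)?)
qed

text \<open>The items 5 to 8 are handled with -1 in place of the entry 2; the two agree only in
  characteristic 3, which is therefore needed just when matching them with char3_family.\<close>

lemma right_products_items567:
  assumes "diassociative (SC (-1) 0 0 0 0 0 (-1) 0) B"
  shows "(\<exists>t. B = SC (-1) 0 0 0 t 0 0 0) \<or> B = SC (-1) 0 0 0 0 (-1) 0 0 \<or> B = SC (-1) 0 0 0 0 0 (-1) 0"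
proof (cases B)
  case (SC p1 p2 p3 p4 q1 q2 q3 q4)
  note basis = diassociative_basis[OF assms[unfolded SC]]
  have p: "p1 = -1" "p2 = 0" "p3 = 0" "p4 = 0" "q4 = 0"
    using basis by (simp add: scmul_def, (elim conjE)?, (simp add: minus_equation_iff)?)+
  note dia = diassociativeD[OF assms[unfolded SC]]
  have q: "q2 * q2 = - q2" "q3 * q3 = - q3" "q1 = 0 \<or> q3 = q2" "q1 = 0 \<or> q3 = 0" "q2 = 0 \<or> q3 = 0"
    using dia(5)[of "(1,0)" "(1,0)" "(0,1)"] dia(4)[of "(0,1)" "(1,0)" "(1,0)"] dia(5)[of "(1,0)" "(1,0)" "(1,0)"]
      dia(4)[of "(1,0)" "(1,0)" "(1,0)"] dia(4)[of "(1,0)" "(0,1)" "(1,0)"] p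
    by (simp_all add: scmul_def)
  show ?thesis using q p unfolding SC square_eq_neg_self_iff by auto
qed

lemma right_products_item8:
  assumes "diassociative (SC (-1) 0 0 t 0 (-1) (-1) 0) B"
  shows "B = SC (-1) 0 0 t 0 (-1) (-1) 0"
proof (cases B)
  case (SC p1 p2 p3 p4 q1 q2 q3 q4)
  show ?thesis using diassociative_basis[OF assms[unfolded SC]] unfolding SC
    by (simp add: scmul_def, (elim conjE)?, (simp add: minus_equation_iff)?)
qed

lemma classified_item1_left:
  assumes "diassociative (SC 0 0 0 0 1 0 0 0) B"
  shows "classified (SC 0 0 0 0 1 0 0 0) B"
proof -
  obtain t where "B = SC 0 0 0 0 t 0 0 0" using right_products_item1[OF assms] by blast
  then show ?thesis by (intro classified_item[of 1 _ _ t]) (simp_all add: char3_family_def)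
qed

lemma classified_items23_left:
  assumes "diassociative (SC 1 0 0 0 0 0 0 0) B"
  shows "classified (SC 1 0 0 0 0 0 0 0) B"
  using right_products_items23[OF assms]
proof
  assume "B = SC 1 0 0 0 0 0 0 0"
  then show ?thesis by (intro classified_item[of 2 _ _ 0]) (simp_all add: char3_family_def)
next
  assume "B = SC 1 0 0 0 0 1 0 0"
  then show ?thesis by (intro classified_item[of 3 _ _ 0]) (simp_all add: char3_family_def)
qed

lemma classified_item4_left:
  assumes "diassociative (SC 1 0 0 0 0 1 0 0) B"
  shows "classified (SC 1 0 0 0 0 1 0 0) B"
  using right_products_item4[OF assms] by (intro classified_item[of 4 _ _ 0]) (simp_all add: char3_family_def)

lemma classified_items567_left:
  fixes B :: "'a::field sc"
  assumes "diassociative (SC (-1) 0 0 0 0 0 (-1) 0) B" "(3::'a) = 0"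
  shows "classified (SC (-1) 0 0 0 0 0 (-1) 0) B"
proof -
  note two = two_eq_neg_one[OF assms(2)]
  from right_products_items567[OF assms(1)] consider t where "B = SC (-1) 0 0 0 t 0 0 0"
    | "B = SC (-1) 0 0 0 0 (-1) 0 0" | "B = SC (-1) 0 0 0 0 0 (-1) 0" by blast
  then show ?thesis
  proof cases
    case (1 t)
    then show ?thesis by (intro classified_item[of 5 _ _ t]) (simp_all add: char3_family_def two)
  next
    case 2
    then show ?thesis by (intro classified_item[of 6 _ _ 0]) (simp_all add: char3_family_def two)
  next
    case 3
    then show ?thesis by (intro classified_item[of 7 _ _ 0]) (simp_all add: char3_family_def two)
  qed
qed

lemma classified_item8_left:
  fixes t :: "'a::field"
  assumes "diassociative (SC (-1) 0 0 t 0 (-1) (-1) 0) B" "(3::'a) = 0"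
  shows "classified (SC (-1) 0 0 t 0 (-1) (-1) 0) B"
  using right_products_item8[OF assms(1)]
  by (intro classified_item[of 8 _ _ t]) (simp_all add: char3_family_def two_eq_neg_one[OF assms(2)])

text \<open>With unit e1, the basis (-e1, e2 + b4 e1) gives the item-8 shape: -e1 is a unit and equals
  2 e1, and (e2 + b4 e1)(e2 + b4 e1) = (a4 + b4 b4) e1 + 3 b4 e2 has no e2-component.\<close>

lemma classified_unital:
  fixes a4 b4 :: "'a::field"
  assumes "diassociative (SC 1 0 0 a4 0 1 1 b4) B" "(3::'a) = 0"
  shows "classified (SC 1 0 0 a4 0 1 1 b4) B"
proof (rule classified_by_change_basis[of "(-1, 0)" "(b4, 1)", OF _ assms(1)])
  have "\<And>x::'a. 3 * x = 0" using assms(2) by simp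
  then have "change_basis (-1, 0) (b4, 1) (SC 1 0 0 a4 0 1 1 b4) = SC (-1) 0 0 (-(a4 + b4 * b4)) 0 (-1) (-1) 0"
    by (simp add: change_basis_def coords_def det2_def scmul_def algebra_simps)
  then show "classified (change_basis (-1, 0) (b4, 1) (SC 1 0 0 a4 0 1 1 b4)) B'"
    if "diassociative (change_basis (-1, 0) (b4, 1) (SC 1 0 0 a4 0 1 1 b4)) B'" for B'
    using that classified_item8_left[OF _ assms(2)] by simp
qed (simp add: det2_def)

lemma classified_split:
  fixes q :: "'a::field"
  assumes "diassociative (SC 1 0 0 0 0 0 0 q) B" "(3::'a) = 0" "q \<noteq> 0"
  shows "classified (SC 1 0 0 0 0 0 0 q) B"
proof (rule classified_by_change_basis[of "(1, 1 / q)" "(0, 1)", OF _ assms(1)])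
  have "change_basis (1, 1 / q) (0, 1) (SC 1 0 0 0 0 0 0 q) = SC 1 0 0 0 0 1 1 q"
    using assms(3) by (simp add: change_basis_def coords_def det2_def scmul_def field_simps power2_eq_square)
  then show "classified (change_basis (1, 1 / q) (0, 1) (SC 1 0 0 0 0 0 0 q)) B'"
    if "diassociative (change_basis (1, 1 / q) (0, 1) (SC 1 0 0 0 0 0 0 q)) B'" for B'
    using that classified_unital[OF _ assms(2)] by simp
qed (simp add: det2_def)

lemma idempotent_e1_cases:
  assumes "sc_associative (SC 1 a2 a3 a4 0 b2 b3 b4)"
  shows "(b2 = 1 \<and> b3 = 1 \<and> a2 = 0 \<and> a3 = 0)
    \<or> (b2 = 1 \<and> b3 = 0 \<and> a2 = 0 \<and> a4 = 0 \<and> b4 = a3)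
    \<or> (b2 = 0 \<and> b3 = 1 \<and> a3 = 0 \<and> a4 = 0 \<and> b4 = a2)
    \<or> (b2 = 0 \<and> b3 = 0 \<and> a3 = a2 \<and> a4 = a2 * a2 - a2 * b4)"
proof -
  note assoc = assms[unfolded sc_associative_def, rule_format]
  have 1: "a2 * b2 = 0" "b2 * b2 = b2" using assoc[of "(1,0)" "(1,0)" "(0,1)"] by (auto simp: scmul_def)
  have 2: "a3 * b3 = 0" "b3 * b3 = b3" using assoc[of "(0,1)" "(1,0)" "(1,0)"] by (auto simp: scmul_def)
  have 3: "a2 + b2 * a3 = a3 + b3 * a2" using assoc[of "(1,0)" "(0,1)" "(1,0)"] by (simp add: scmul_def)
  have 4: "b3 * a4 = b2 * a4" "a3 * b2 + b3 * b4 = a2 * b3 + b2 * b4"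
    using assoc[of "(0,1)" "(1,0)" "(0,1)"] by (simp_all add: scmul_def algebra_simps)
  have 5: "a2 * a2 + b2 * a4 = a4 + a2 * b4"
    using assoc[of "(1,0)" "(0,1)" "(0,1)"] by (simp add: scmul_def algebra_simps)
  from 1(2) 2(2) consider "b2 = 1" "b3 = 1" | "b2 = 1" "b3 = 0" | "b2 = 0" "b3 = 1" | "b2 = 0" "b3 = 0"
    unfolding square_eq_self_iff by blast
  then show ?thesis
  proof cases
    case 1
    then show ?thesis using \<open>a2 * b2 = 0\<close> \<open>a3 * b3 = 0\<close> by simp
  next
    case 2
    then show ?thesis using \<open>a2 * b2 = 0\<close> 4 by simp
  next
    case 3
    then show ?thesis using \<open>a3 * b3 = 0\<close> 4 by simp
  next
    case 4
    then show ?thesis using 3 5 by (simp add: algebra_simps)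
  qed
qed

lemma classified_idempotent_e1:
  fixes A B :: "'a::field sc"
  assumes dia: "diassociative A B" and char3: "(3::'a) = 0" and idem: "scmul A (1, 0) (1, 0) = (1, 0)"
  shows "classified A B"
proof -
  obtain a2 a3 a4 b2 b3 b4 where A: "A = SC 1 a2 a3 a4 0 b2 b3 b4"
    using idem by (cases A) (simp add: scmul_def)
  from idempotent_e1_cases[OF diassociative_imp_sc_associative[OF dia[unfolded A]]]
  consider "b2 = 1" "b3 = 1" "a2 = 0" "a3 = 0"
    | "b2 = 1" "b3 = 0" "a2 = 0" "a4 = 0" "b4 = a3"
    | "b2 = 0" "b3 = 1" "a3 = 0" "a4 = 0" "b4 = a2"
    | "b2 = 0" "b3 = 0" "a3 = a2" "a4 = a2 * a2 - a2 * b4"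
    by blast
  then show ?thesis
  proof cases
    case 1
    then show ?thesis using classified_unital dia char3 unfolding A by simp
  next
    case 2
    have "change_basis (1, 0) (- a3, 1) A = SC 1 0 0 0 0 1 0 0"
      using 2 by (simp add: A change_basis_def coords_def det2_def scmul_def algebra_simps)
    then show ?thesis
      by (intro classified_by_change_basis[of "(1, 0)" "(- a3, 1)", OF _ dia]) (simp_all add: det2_def classified_item4_left)
  next
    case 3
    have "change_basis (-1, 0) (- a2, 1) A = SC (-1) 0 0 0 0 0 (-1) 0"
      using 3 by (simp add: A change_basis_def coords_def det2_def scmul_def algebra_simps)
    then show ?thesis
      by (intro classified_by_change_basis[of "(-1, 0)" "(- a2, 1)", OF _ dia]) (simp_all add: det2_def classified_items567_left char3)
  next
    case 4
    have "change_basis (1, 0) (- a2, 1) A = SC 1 0 0 0 0 0 0 b4"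
      using 4 by (simp add: A change_basis_def coords_def det2_def scmul_def algebra_simps)
    moreover have "classified (SC 1 0 0 0 0 0 0 b4) B'" if "diassociative (SC 1 0 0 0 0 0 0 b4) B'" for B'
      using that classified_items23_left classified_split[OF _ char3] by (cases "b4 = 0") simp_all
    ultimately show ?thesis
      by (intro classified_by_change_basis[of "(1, 0)" "(- a2, 1)", OF _ dia]) (simp_all add: det2_def)
  qed
qed

lemma classified_by_idempotent:
  fixes A B :: "'a::field sc"
  assumes "det2 u v \<noteq> 0" "diassociative A B" "(3::'a) = 0" "scmul A u u = u"
  shows "classified A B"
proof (rule classified_by_change_basis[OF assms(1,2)])
  have "scmul (change_basis u v A) (1, 0) (1, 0) = (1, 0)"
    using assms(1,4) by (simp add: square_change_basis_e1_iff lincomb_def)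
  then show "classified (change_basis u v A) B'" if "diassociative (change_basis u v A) B'" for B'
    using classified_idempotent_e1[OF that assms(3)] by blast
qed

lemma square_e2_constraints:
  assumes "sc_associative (SC 0 a2 a3 a4 1 b2 b3 b4)"
  shows "a3 = a2 \<and> b3 = b2 \<and> a4 = a2 * b2 \<and> b4 = a2 + b2 * b2"
  using assms[unfolded sc_associative_def, rule_format, of "(1,0)" "(1,0)" "(1,0)"]
    assms[unfolded sc_associative_def, rule_format, of "(1,0)" "(1,0)" "(0,1)"]
  by (simp add: scmul_def algebra_simps)

lemma classified_square_e1_e2:
  fixes A B :: "'a::field sc"
  assumes dia: "diassociative A B" and char3: "(3::'a) = 0" and sq: "scmul A (1, 0) (1, 0) = (0, 1)"
  shows "classified A B"
proof -
  obtain a2 a3 a4 b2 b3 b4 where A: "A = SC 0 a2 a3 a4 1 b2 b3 b4"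
    using sq by (cases A) (simp add: scmul_def)
  have c: "a3 = a2" "b3 = b2" "a4 = a2 * b2" "b4 = a2 + b2 * b2"
    using square_e2_constraints[OF diassociative_imp_sc_associative[OF dia[unfolded A]]] by simp_all
  consider "a2 \<noteq> 0" | "a2 = 0" "b2 \<noteq> 0" | "a2 = 0" "b2 = 0" by blast
  then show ?thesis
  proof cases
    case 1
    show ?thesis
    proof (rule classified_by_idempotent[of "(- b2 / a2, 1 / a2)" "(1, 0)", OF _ dia char3])
      show "scmul A (- b2 / a2, 1 / a2) (- b2 / a2, 1 / a2) = (- b2 / a2, 1 / a2)"
        using 1 c by (simp add: A scmul_def field_simps power2_eq_square)
    qed (use 1 in \<open>simp add: det2_def\<close>)
  next
    case 2
    show ?thesis
    proof (rule classified_by_idempotent[of "(0, 1 / (b2 * b2))" "(1, 0)", OF _ dia char3])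
      show "scmul A (0, 1 / (b2 * b2)) (0, 1 / (b2 * b2)) = (0, 1 / (b2 * b2))"
        using 2 c by (simp add: A scmul_def field_simps power2_eq_square)
    qed (use 2 in \<open>simp add: det2_def\<close>)
  next
    case 3
    then show ?thesis using classified_item1_left dia c unfolding A by simp
  qed
qed

lemma classified_square_e1_nonzero:
  fixes A B :: "'a::field sc"
  assumes dia: "diassociative A B" and char3: "(3::'a) = 0" and sq: "scmul A (1, 0) (1, 0) \<noteq> (0, 0)"
  shows "classified A B"
proof (cases "be1 A = 0")
  case True
  with sq have "al1 A \<noteq> 0" by (simp add: scmul_def)
  show ?thesis
  proof (rule classified_by_idempotent[of "(1 / al1 A, 0)" "(0, 1)", OF _ dia char3])
    show "scmul A (1 / al1 A, 0) (1 / al1 A, 0) = (1 / al1 A, 0)"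
      using True \<open>al1 A \<noteq> 0\<close> by (simp add: scmul_def field_simps power2_eq_square)
  qed (use \<open>al1 A \<noteq> 0\<close> in \<open>simp add: det2_def\<close>)
next
  case False
  let ?u = "(1, 0) :: 'a \<times> 'a" and ?v = "scmul A (1, 0) (1, 0)"
  have d: "det2 ?u ?v \<noteq> 0" using False by (simp add: det2_def scmul_def)
  show ?thesis
  proof (rule classified_by_change_basis[OF d dia])
    have "scmul (change_basis ?u ?v A) (1, 0) (1, 0) = (0, 1)"
      using d by (simp add: square_change_basis_e1_iff lincomb_def)
    then show "classified (change_basis ?u ?v A) B'" if "diassociative (change_basis ?u ?v A) B'" for B'
      using classified_square_e1_e2[OF that char3] by blast
  qed
qed

lemma sc_associative_squares_zero:
  assumes "sc_associative M" "\<And>w. scmul M w w = (0, 0)"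
  shows "scmul M x y = (0, 0)"
proof -
  have sq: "al1 M = 0" "be1 M = 0" "al4 M = 0" "be4 M = 0" "al3 M = - al2 M" "be3 M = - be2 M"
    using assms(2)[of "(1, 0)"] assms(2)[of "(0, 1)"] assms(2)[of "(1, 1)"]
    by (simp_all add: scmul_def eq_neg_iff_add_eq_0 add.commute)
  have "al2 M * al2 M = 0" using assms(1)[unfolded sc_associative_def, rule_format, of "(1,0)" "(0,1)" "(0,1)"] sq
    by (simp add: scmul_def)
  moreover have "be2 M * be2 M = 0" using assms(1)[unfolded sc_associative_def, rule_format, of "(0,1)" "(1,0)" "(1,0)"] sq
    by (simp add: scmul_def)
  ultimately show ?thesis using sq by (simp add: scmul_def)
qed

lemma classified_nonzero:
  fixes A B :: "'a::field sc"
  assumes dia: "diassociative A B" and char3: "(3::'a) = 0" and nonzero: "\<exists>x y. scmul A x y \<noteq> (0, 0)"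
  shows "classified A B"
proof -
  obtain w where w: "scmul A w w \<noteq> (0, 0)"
    using sc_associative_squares_zero[OF diassociative_imp_sc_associative[OF dia]] nonzero by blast
  then have "w \<noteq> (0, 0)" by (auto simp: scmul_def)
  define v :: "'a \<times> 'a" where "v = (if fst w = 0 then (1, 0) else (0, 1))"
  have d: "det2 w v \<noteq> 0" using \<open>w \<noteq> (0, 0)\<close> by (cases w) (auto simp: v_def det2_def)
  show ?thesis
  proof (rule classified_by_change_basis[OF d dia])
    have "scmul (change_basis w v A) (1, 0) (1, 0) \<noteq> (0, 0)"
      using d w by (simp add: square_change_basis_e1_iff lincomb_def)
    then show "classified (change_basis w v A) B'" if "diassociative (change_basis w v A) B'" for B'
      using classified_square_e1_nonzero[OF that char3] by blast
  qed
qed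

section \<open>Isomorphism invariants\<close>

definition nilpotent3 :: "'a::field sc \<Rightarrow> bool" where
  "nilpotent3 M \<longleftrightarrow> (\<forall>x y z. scmul M (scmul M x y) z = (0, 0))"

definition has_left_unit :: "'a::field sc \<Rightarrow> bool" where
  "has_left_unit M \<longleftrightarrow> (\<exists>u. \<forall>y. scmul M u y = y)"

definition has_right_unit :: "'a::field sc \<Rightarrow> bool" where
  "has_right_unit M \<longleftrightarrow> (\<exists>u. \<forall>y. scmul M y u = y)"

lemma nilpotent3_surj_hom:
  assumes "surj f" "f (0, 0) = (0, 0)" "sc_hom f M M'" "nilpotent3 M"
  shows "nilpotent3 M'"
  unfolding nilpotent3_def
proof (intro allI)
  fix x' y' z'
  obtain x y z where "x' = f x" "y' = f y" "z' = f z" using \<open>surj f\<close> by (metis surjD)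
  then show "scmul M' (scmul M' x' y') z' = (0, 0)"
    using assms(2-4) unfolding sc_hom_def nilpotent3_def by metis
qed

lemma has_left_unit_surj_hom:
  assumes "surj f" "sc_hom f M M'" "has_left_unit M"
  shows "has_left_unit M'"
proof -
  obtain u where u: "\<And>y. scmul M u y = y" using assms(3) unfolding has_left_unit_def by blast
  have "scmul M' (f u) y' = y'" for y'
    using surjD[OF assms(1), of y'] assms(2) u unfolding sc_hom_def by metis
  then show ?thesis unfolding has_left_unit_def by blast
qed

lemma has_right_unit_surj_hom:
  assumes "surj f" "sc_hom f M M'" "has_right_unit M"
  shows "has_right_unit M'"
proof -
  obtain u where u: "\<And>y. scmul M y u = y" using assms(3) unfolding has_right_unit_def by blast
  have "scmul M' y' (f u) = y'" for y'
    using surjD[OF assms(1), of y'] assms(2) u unfolding sc_hom_def by metis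
  then show ?thesis unfolding has_right_unit_def by blast
qed

lemma dialg_iso_preserves:
  assumes "dialg_iso D E"
  shows "nilpotent3 (fst D) \<Longrightarrow> nilpotent3 (fst E)"
    and "has_left_unit (fst D) \<Longrightarrow> has_left_unit (fst E)"
    and "has_right_unit (fst D) \<Longrightarrow> has_right_unit (fst E)"
    and "has_left_unit (snd D) \<Longrightarrow> has_left_unit (snd E)"
    and "has_right_unit (snd D) \<Longrightarrow> has_right_unit (snd E)"
proof -
  obtain a b c d where det: "a * d - b * c \<noteq> 0"
    and hom: "sc_hom (linmap a b c d) (fst D) (fst E)" "sc_hom (linmap a b c d) (snd D) (snd E)"
    using assms unfolding dialg_iso_iff_sc_hom by blast
  have surj: "surj (linmap a b c d)" using linmap_inverse(2)[OF refl det] by (metis surjI)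
  have "linmap a b c d (0, 0) = (0, 0)" by (simp add: linmap_def)
  with surj hom show "nilpotent3 (fst D) \<Longrightarrow> nilpotent3 (fst E)"
    and "has_left_unit (fst D) \<Longrightarrow> has_left_unit (fst E)"
    and "has_right_unit (fst D) \<Longrightarrow> has_right_unit (fst E)"
    and "has_left_unit (snd D) \<Longrightarrow> has_left_unit (snd E)"
    and "has_right_unit (snd D) \<Longrightarrow> has_right_unit (snd E)"
    by (simp_all add: nilpotent3_surj_hom has_left_unit_surj_hom has_right_unit_surj_hom)
qed

definition iso_invariants :: "'a::field sc \<times> 'a sc \<Rightarrow> bool \<times> bool \<times> bool \<times> bool \<times> bool" where
  "iso_invariants D =
     (nilpotent3 (fst D), has_left_unit (fst D), has_right_unit (fst D), has_left_unit (snd D), has_right_unit (snd D))"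

lemma iso_invariants_eq:
  assumes "dialg_iso D E"
  shows "iso_invariants D = iso_invariants E"
  using dialg_iso_preserves[OF assms] dialg_iso_preserves[OF dialg_iso_sym[OF assms]]
  unfolding iso_invariants_def prod.inject by blast

lemma not_nilpotent3I: "scmul M (scmul M x y) z \<noteq> (0, 0) \<Longrightarrow> \<not> nilpotent3 M"
  unfolding nilpotent3_def by blast

lemma has_left_unitI: "(\<And>y. scmul M u y = y) \<Longrightarrow> has_left_unit M"
  unfolding has_left_unit_def by blast

lemma has_right_unitI: "(\<And>y. scmul M y u = y) \<Longrightarrow> has_right_unit M"
  unfolding has_right_unit_def by blast

lemma not_has_left_unitI: "(\<And>u. scmul M u y \<noteq> y) \<Longrightarrow> \<not> has_left_unit M"
  unfolding has_left_unit_def by blast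

lemma not_has_right_unitI: "(\<And>u. scmul M y u \<noteq> y) \<Longrightarrow> \<not> has_right_unit M"
  unfolding has_right_unit_def by blast

lemma iso_invariants_char3_family:
  fixes t :: "'a::field"
  assumes "(3::'a) = 0"
  shows "iso_invariants (char3_family 1 t) = (True, False, False, False, False)"
    and "iso_invariants (char3_family 2 t) = (False, False, False, False, False)"
    and "iso_invariants (char3_family 3 t) = (False, False, False, True, False)"
    and "iso_invariants (char3_family 4 t) = (False, True, False, True, False)"
    and "iso_invariants (char3_family 5 t) = (False, False, True, False, False)"
    and "iso_invariants (char3_family 6 t) = (False, False, True, True, False)"
    and "iso_invariants (char3_family 7 t) = (False, False, True, False, True)"
    and "iso_invariants (char3_family 8 t) = (False, True, True, True, True)"
proof -
  have "nilpotent3 (SC 0 0 0 0 s 0 0 0)" for s :: 'a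
    unfolding nilpotent3_def by (simp add: scmul_def)
  moreover have "\<not> has_left_unit (SC 0 0 0 0 s 0 0 0)" "\<not> has_right_unit (SC 0 0 0 0 s 0 0 0)" for s :: 'a
    by (rule not_has_left_unitI[of _ "(1, 0)"] not_has_right_unitI[of _ "(1, 0)"]; simp add: scmul_def)+
  moreover have "\<not> nilpotent3 (SC 1 0 0 0 0 0 0 (0::'a))" "\<not> nilpotent3 (SC 1 0 0 0 0 1 0 (0::'a))"
    "\<not> nilpotent3 (SC (-1) 0 0 0 0 0 (-1) (0::'a))" "\<not> nilpotent3 (SC (-1) 0 0 t 0 (-1) (-1) 0)"
    by (rule not_nilpotent3I[of _ "(1, 0)" "(1, 0)" "(1, 0)"]; simp add: scmul_def)+
  moreover have "\<not> has_left_unit (SC 1 0 0 0 0 0 0 (0::'a))" "\<not> has_left_unit (SC (-1) 0 0 0 0 0 (-1) (0::'a))"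
    "\<not> has_left_unit (SC (-1) 0 0 0 s 0 0 0)" for s :: 'a
    by (rule not_has_left_unitI[of _ "(0, 1)"]; simp add: scmul_def)+
  moreover have "\<not> has_right_unit (SC 1 0 0 0 0 0 0 (0::'a))" "\<not> has_right_unit (SC 1 0 0 0 0 1 0 (0::'a))"
    "\<not> has_right_unit (SC (-1) 0 0 0 s 0 0 0)" "\<not> has_right_unit (SC (-1) 0 0 0 0 (-1) 0 (0::'a))" for s :: 'a
    by (rule not_has_right_unitI[of _ "(0, 1)"]; simp add: scmul_def)+
  moreover have "has_left_unit (SC 1 0 0 0 0 1 0 (0::'a))"
    by (rule has_left_unitI[of _ "(1, 0)"]) (simp add: scmul_def)
  moreover have "has_left_unit (SC (-1) 0 0 0 0 (-1) 0 (0::'a))" "has_left_unit (SC (-1) 0 0 t 0 (-1) (-1) 0)"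
    by (rule has_left_unitI[of _ "(-1, 0)"]; simp add: scmul_def)+
  moreover have "has_right_unit (SC (-1) 0 0 0 0 0 (-1) (0::'a))" "has_right_unit (SC (-1) 0 0 t 0 (-1) (-1) 0)"
    by (rule has_right_unitI[of _ "(-1, 0)"]; simp add: scmul_def)+
  ultimately show "iso_invariants (char3_family 1 t) = (True, False, False, False, False)"
    and "iso_invariants (char3_family 2 t) = (False, False, False, False, False)"
    and "iso_invariants (char3_family 3 t) = (False, False, False, True, False)"
    and "iso_invariants (char3_family 4 t) = (False, True, False, True, False)"
    and "iso_invariants (char3_family 5 t) = (False, False, True, False, False)"
    and "iso_invariants (char3_family 6 t) = (False, False, True, True, False)"
    and "iso_invariants (char3_family 7 t) = (False, False, True, False, True)"
    and "iso_invariants (char3_family 8 t) = (False, True, True, True, True)"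
    by (simp_all add: iso_invariants_def char3_family_def two_eq_neg_one[OF assms])
qed

lemma char3_family_not_iso:
  fixes t s :: "'a::field"
  assumes "(3::'a) = 0" "i \<in> {1..8}" "j \<in> {1..8}" "i \<noteq> j"
  shows "\<not> dialg_iso (char3_family i t) (char3_family j s)"
proof -
  have "i \<in> {1, 2, 3, 4, 5, 6, 7, 8}" "j \<in> {1, 2, 3, 4, 5, 6, 7, 8}" using assms(2,3) by auto
  then have "iso_invariants (char3_family i t) \<noteq> iso_invariants (char3_family j s)"
    using assms(4) iso_invariants_char3_family[OF assms(1)] by (auto simp del: One_nat_def)
  then show ?thesis using iso_invariants_eq by blast
qed

theorem mainTheorem6:
  assumes "CHAR('a::field) = 3"
  shows "(\<forall>A B :: 'a sc. diassociative A B \<and> (\<exists>x y. scmul A x y \<noteq> (0, 0)) \<longrightarrow>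
            (\<exists>k \<in> {1..8}. \<exists>D. in_item k D \<and> dialg_iso (A, B) D))
       \<and> (\<forall>i j D E. i \<in> {1..8} \<and> j \<in> {1..8} \<and> i \<noteq> j \<and> in_item i D \<and> in_item j E
            \<longrightarrow> \<not> dialg_iso D (E :: 'a sc \<times> 'a sc))"
proof -
  have char3: "(3::'a) = 0" using of_nat_CHAR[where 'a = 'a] assms by simp
  show ?thesis
    using classified_nonzero[OF _ char3] char3_family_not_iso[OF char3]
    unfolding classified_def in_item_def by blast
qed

end
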